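(* Let $k$ be a field, let $M$ be an $n$-dimensional vector space over $k$ with basis $\{m_1,\dots,m_n\}$, and let $\phi:\{1,\dots,n\}\to\{1,\dots,n\}$ be a function with $\phi^2=\phi$. Define $R^\phi:M\otimes M\to M\otimes M$ by $$R^\phi(m_i\otimes m_j)=\delta_{ij}\,\delta_{i\in \mathrm{Im}(\phi)}\sum_{a,b\in\phi^{-1}(i)} m_a\otimes m_b$$ for all $i,j=1,\dots,n$, where $\delta_{i\in\mathrm{Im}(\phi)}$ equals $1$ if $i\in\mathrm{Im}(\phi)$ and $0$ otherwise. Then $R:=R^\phi$ is symmetric and satisfies $$R^{12}R^{13}=R^{13}R^{12}=R^{12}R^{23}=R^{23}R^{12}.$$ In particular, $R^\phi$ is a solution of the Long equation $R^{12}R^{13}=R^{13}R^{12}$, $R^{12}R^{23}=R^{23}R^{12}$.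
   Context: For $R\in\mathrm{End}_k(M\otimes M)$: $R^{12}=R\otimes I$, $R^{23}=I\otimes R$, $R^{13}=(I\otimes\tau)(R\otimes I)(I\otimes\tau)$, where $\tau(m\otimes n)=n\otimes m$ is the flip, and these are viewed in $\mathrm{End}_k(M\otimes M\otimes M)$. $R$ is called symmetric if $R^{12}=R^{21}$, where $R^{21}=\tau R\tau$; in coordinates, writing $R(m_v\otimes m_u)=\sum_{i,j}x^{ji}_{uv}m_i\otimes m_j$, symmetry is expressed as $x^{ji}_{uv}=x^{ji}_{vu}$ for all $i,j,u,v$. *)

theory Defs
  imports "HOL-Analysis.Analysis"
begin

text \<open>M = k^n with basis indexed by the finite type 'n (n = CARD('n)).
 An endomorphism T of M\<otimes>M is represented by its matrix w.r.t. the basis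
 m_i \<otimes> m_j, indexed by pairs: T $ (i,j) $ (u,v) is the coefficient of
 m_i \<otimes> m_j in T(m_u \<otimes> m_v).\<close>

type_synonym ('a,'n) end2 = "'a ^ ('n \<times> 'n) ^ ('n \<times> 'n)"
type_synonym ('a,'n) end3 = "'a ^ ('n \<times> 'n \<times> 'n) ^ ('n \<times> 'n \<times> 'n)"

definition flip :: "('a::field, 'n::finite) end2" where
  "flip = (\<chi> p q. if fst p = snd q \<and> snd p = fst q then 1 else 0)"

definition tensor_I :: "('a::field, 'n::finite) end2 \<Rightarrow> ('a, 'n) end3" where
  "tensor_I R = (\<chi> p q. case p of (a,b,c) \<Rightarrow> case q of (u,v,w) \<Rightarrow>
     R $ (a,b) $ (u,v) * (if c = w then 1 else 0))"

definition I_tensor :: "('a::field, 'n::finite) end2 \<Rightarrow> ('a, 'n) end3" where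
  "I_tensor R = (\<chi> p q. case p of (a,b,c) \<Rightarrow> case q of (u,v,w) \<Rightarrow>
     (if a = u then 1 else 0) * R $ (b,c) $ (v,w))"

definition R12 :: "('a::field, 'n::finite) end2 \<Rightarrow> ('a, 'n) end3" where
  "R12 R = tensor_I R"

definition R23 :: "('a::field, 'n::finite) end2 \<Rightarrow> ('a, 'n) end3" where
  "R23 R = I_tensor R"

definition R13 :: "('a::field, 'n::finite) end2 \<Rightarrow> ('a, 'n) end3" where
  "R13 R = I_tensor flip ** tensor_I R ** I_tensor flip"

definition symmetric_R :: "('a::field, 'n::finite) end2 \<Rightarrow> bool" where
  "symmetric_R R \<longleftrightarrow> flip ** R ** flip = R"

definition Rphi :: "('n::finite \<Rightarrow> 'n) \<Rightarrow> ('a::field, 'n) end2" where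
  "Rphi \<phi> = (\<chi> p q. case p of (a,b) \<Rightarrow> case q of (i,j) \<Rightarrow>
      (if i = j then 1 else 0) * (if i \<in> range \<phi> then 1 else 0) *
      (if \<phi> a = i \<and> \<phi> b = i then 1 else 0))"

end

theory Submission imports Defs begin

text \<open>All operators involved are 0/1 matrices with at most one nonzero entry in each row, i.e.
 maps of the form m_q \<mapsto> \<Sum>{m_p. P p \<and> f p = q}. Such matrices compose by composing the
 index maps, so every product of two of R^12, R^13, R^23 is again of this form. Using
 \<phi> \<circ> \<phi> = \<phi>, each of the four products sends m_i \<otimes> m_j \<otimes> m_k to zero unless
 i = j = k \<in> range \<phi>, and then to the sum of m_a \<otimes> m_b \<otimes> m_c over all a, b, c in the
 fibre of i.\<close>

definition fibre_matrix :: "('p \<Rightarrow> bool) \<Rightarrow> ('p \<Rightarrow> 'q) \<Rightarrow> 'a::zero_neq_one ^ 'q ^ 'p" where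
  "fibre_matrix P f = (\<chi> p q. if P p \<and> q = f p then 1 else 0)"

lemma fibre_matrix_mult:
  "(fibre_matrix P f :: 'a::semiring_1 ^ 'q::finite ^ 'p) ** fibre_matrix Q g
     = fibre_matrix (\<lambda>p. P p \<and> Q (f p)) (g \<circ> f)"
  by (simp add: vec_eq_iff matrix_matrix_mult_def fibre_matrix_def
      if_distrib[of "\<lambda>x. x * _"] cong: if_cong)

lemma fibre_matrix_cong:
  assumes "\<And>p. P p \<longleftrightarrow> P' p" and "\<And>p. P p \<Longrightarrow> f p = f' p"
  shows "fibre_matrix P f = fibre_matrix P' f'"
  using assms by (simp add: vec_eq_iff fibre_matrix_def)

lemma flip_eq_fibre_matrix: "flip = fibre_matrix (\<lambda>_. True) (\<lambda>(a, b). (b, a))"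
  by (auto simp: vec_eq_iff flip_def fibre_matrix_def)

lemma tensor_I_fibre_matrix:
  "tensor_I (fibre_matrix P f) =
     fibre_matrix (\<lambda>(a, b, c). P (a, b)) (\<lambda>(a, b, c). (fst (f (a, b)), snd (f (a, b)), c))"
  by (auto simp: vec_eq_iff tensor_I_def fibre_matrix_def prod_eq_iff)

lemma I_tensor_fibre_matrix:
  "I_tensor (fibre_matrix P f) =
     fibre_matrix (\<lambda>(a, b, c). P (b, c)) (\<lambda>(a, b, c). (a, fst (f (b, c)), snd (f (b, c))))"
  by (auto simp: vec_eq_iff I_tensor_def fibre_matrix_def prod_eq_iff)

lemma Rphi_eq_fibre_matrix:
  "Rphi \<phi> = fibre_matrix (\<lambda>(a, b). \<phi> a = \<phi> b) (\<lambda>(a, b). (\<phi> a, \<phi> a))"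
  by (auto simp: vec_eq_iff Rphi_def fibre_matrix_def)

lemma R12_Rphi:
  "R12 (Rphi \<phi>) = fibre_matrix (\<lambda>(a, b, c). \<phi> a = \<phi> b) (\<lambda>(a, b, c). (\<phi> a, \<phi> a, c))"
  by (simp add: R12_def Rphi_eq_fibre_matrix tensor_I_fibre_matrix case_prod_beta)

lemma R23_Rphi:
  "R23 (Rphi \<phi>) = fibre_matrix (\<lambda>(a, b, c). \<phi> b = \<phi> c) (\<lambda>(a, b, c). (a, \<phi> b, \<phi> b))"
  by (simp add: R23_def Rphi_eq_fibre_matrix I_tensor_fibre_matrix case_prod_beta)

lemma R13_Rphi:
  "R13 (Rphi \<phi>) = fibre_matrix (\<lambda>(a, b, c). \<phi> a = \<phi> c) (\<lambda>(a, b, c). (\<phi> a, b, \<phi> a))"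
  unfolding R13_def R12_def[symmetric] R12_Rphi flip_eq_fibre_matrix
    I_tensor_fibre_matrix fibre_matrix_mult
  by (rule fibre_matrix_cong) auto

lemma symmetric_Rphi: "symmetric_R (Rphi \<phi> :: ('a::field, 'n::finite) end2)"
  unfolding symmetric_R_def Rphi_eq_fibre_matrix flip_eq_fibre_matrix fibre_matrix_mult
  by (rule fibre_matrix_cong) auto

definition Rphi3 :: "('n::finite \<Rightarrow> 'n) \<Rightarrow> ('a::zero_neq_one, 'n) end3" where
  "Rphi3 \<phi> = fibre_matrix (\<lambda>(a, b, c). \<phi> a = \<phi> b \<and> \<phi> b = \<phi> c) (\<lambda>(a, b, c). (\<phi> a, \<phi> a, \<phi> a))"

context
  fixes \<phi> :: "'n::finite \<Rightarrow> 'n"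
  assumes idem: "\<phi> \<circ> \<phi> = \<phi>"
begin

private lemma idem_apply [simp]: "\<phi> (\<phi> x) = \<phi> x"
  using idem by (metis comp_apply)

lemma R12_R13_Rphi: "R12 (Rphi \<phi>) ** R13 (Rphi \<phi>) = Rphi3 \<phi>"
  unfolding R12_Rphi R13_Rphi fibre_matrix_mult Rphi3_def
  by (rule fibre_matrix_cong) auto

lemma R13_R12_Rphi: "R13 (Rphi \<phi>) ** R12 (Rphi \<phi>) = Rphi3 \<phi>"
  unfolding R12_Rphi R13_Rphi fibre_matrix_mult Rphi3_def
  by (rule fibre_matrix_cong) auto

lemma R12_R23_Rphi: "R12 (Rphi \<phi>) ** R23 (Rphi \<phi>) = Rphi3 \<phi>"
  unfolding R12_Rphi R23_Rphi fibre_matrix_mult Rphi3_def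
  by (rule fibre_matrix_cong) auto

lemma R23_R12_Rphi: "R23 (Rphi \<phi>) ** R12 (Rphi \<phi>) = Rphi3 \<phi>"
  unfolding R12_Rphi R23_Rphi fibre_matrix_mult Rphi3_def
  by (rule fibre_matrix_cong) auto

end

theorem proposition3p4:
  fixes \<phi> :: "'n::finite \<Rightarrow> 'n"
  assumes "\<phi> \<circ> \<phi> = \<phi>"
  defines "R \<equiv> (Rphi \<phi> :: ('a::field, 'n) end2)"
  shows "symmetric_R R \<and>
         R12 R ** R13 R = R13 R ** R12 R \<and>
         R13 R ** R12 R = R12 R ** R23 R \<and>
         R12 R ** R23 R = R23 R ** R12 R"
  unfolding R_def
  by (simp add: symmetric_Rphi R12_R13_Rphi[OF assms(1)] R13_R12_Rphi[OF assms(1)]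
      R12_R23_Rphi[OF assms(1)] R23_R12_Rphi[OF assms(1)])

end
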